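(* Let $n\ge 2$ be an integer and define $\tau_i=-2\sin\frac{i\pi}{2n}$ for $0\le i\le n$. Let $S\in\mathbb{R}^{(n-1)\times(n-1)}$ be the matrix with columns $\bm s_1,\dots,\bm s_{n-1}$, where $\bm s_j=\big(\sin\frac{j\pi}{n},\sin\frac{2j\pi}{n},\dots,\sin\frac{(n-1)j\pi}{n}\big)^{\mathsf T}$. Let $C\in\mathbb{R}^{n\times n}$ be the matrix with columns $\bm c_0,\dots,\bm c_{n-1}$, where $\bm c_j=\nu_j\big(\cos\frac{j\pi}{2n},\cos\frac{3j\pi}{2n},\dots,\cos\frac{(2n-1)j\pi}{2n}\big)^{\mathsf T}$, with $\nu_0=\frac{1}{\sqrt2}$ and $\nu_j=1$ for $1\le j\le n-1$. Let $B\in\mathbb{R}^{(n-1)\times n}$ be the matrix with entries $B_{i,i}=-1$, $B_{i,i+1}=1$ for $1\le i\le n-1$ and all other entries $0$. Then $$S^{-1}BC=SBC^{-\mathsf T}=\Gamma,$$ where $\Gamma=[\bm 0,\Lambda]\in\mathbb{R}^{(n-1)\times n}$, $\bm 0$ is the zero column of length $n-1$, and $\Lambda=\mathrm{diag}(\tau_1,\dots,\tau_{n-1})$.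
   Context: $C^{-\mathsf T}$ denotes the inverse of the transpose of $C$. *)

theory Defs
  imports Complex_Main "Jordan_Normal_Form.Matrix"
begin

(* The (two-sided) inverse of a square matrix; meaningful when invertible_mat A. *)
definition mat_inv :: "'a :: semiring_1 mat \<Rightarrow> 'a mat" where
  "mat_inv A = (SOME B. B \<in> carrier_mat (dim_row A) (dim_row A) \<and> inverts_mat A B \<and> inverts_mat B A)"

(* All matrices below use 0-based indices (JNF convention); paper index k corresponds to k-1
   for rows/columns of S, B, Gamma-rows, and columns c_0..c_{n-1} of C correspond to 0..n-1. *)

definition tau :: "nat \<Rightarrow> nat \<Rightarrow> real" where
  "tau n i = - 2 * sin (real i * pi / (2 * real n))"

definition S_mat :: "nat \<Rightarrow> real mat" where
  "S_mat n = mat (n - 1) (n - 1) (\<lambda>(i, j). sin (real (i + 1) * real (j + 1) * pi / real n))"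

definition nu :: "nat \<Rightarrow> real" where
  "nu j = (if j = 0 then 1 / sqrt 2 else 1)"

definition C_mat :: "nat \<Rightarrow> real mat" where
  "C_mat n = mat n n (\<lambda>(i, j). nu j * cos (real (2 * i + 1) * real j * pi / (2 * real n)))"

definition B_mat :: "nat \<Rightarrow> real mat" where
  "B_mat n = mat (n - 1) n (\<lambda>(i, j). if j = i then -1 else if j = i + 1 then 1 else 0)"

definition Gamma_mat :: "nat \<Rightarrow> real mat" where
  "Gamma_mat n = mat (n - 1) n (\<lambda>(i, j). if j = i + 1 then tau n (i + 1) else 0)"

end

theory Submission
  imports Defs "Jordan_Normal_Form.Determinant"
begin

(* S is the DST-I matrix and C the DCT-II matrix with the normalisation nu; by the discrete
   orthogonality of sines and cosines (cosine sums evaluated by telescoping against sin(y/2)),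
   both satisfy Q^T Q = (n/2) I, so S^-1 = (2/n) S and C^-T = (2/n) C.  Moreover, B takes
   differences of consecutive rows of C, and cos(X + Y) - cos(X - Y) = -2 sin X sin Y with
   X = (i+1) j pi / n and Y = j pi / 2n gives B C = S Gamma. *)

lemma sum_cos_multiples_telescope:
  fixes y :: real
  shows "2 * sin (y / 2) * (\<Sum>k<N. cos (real k * y)) = sin ((real N - 1 / 2) * y) + sin (y / 2)"
proof (induction N)
  case (Suc N)
  have "2 * sin (y / 2) * cos (real N * y) = sin (real N * y + y / 2) - sin (real N * y - y / 2)"
    by (simp add: sin_add sin_diff)
  then show ?case
    using Suc by (simp add: algebra_simps)
qed simp

lemma sum_cos_odd_multiples_telescope:
  fixes x :: real
  shows "2 * sin x * (\<Sum>i<N. cos (real (2 * i + 1) * x)) = sin (real (2 * N) * x)"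
proof (induction N)
  case (Suc N)
  have "2 * sin x * cos (real (2 * N + 1) * x) = sin (real (2 * N + 1) * x + x) - sin (real (2 * N + 1) * x - x)"
    by (simp add: sin_add sin_diff)
  then show ?case
    using Suc by (simp add: algebra_simps)
qed simp

lemma sin_half_angle_nonzero:
  fixes d :: int
  assumes "d \<noteq> 0" "\<bar>d\<bar> < 2 * int n"
  shows "sin (of_int d * pi / (2 * real n)) \<noteq> 0"
proof -
  have "\<bar>of_int d * pi / (2 * real n)\<bar> < pi"
    using assms by (simp add: abs_mult field_simps)
  then show ?thesis
    using assms by (simp add: sin_zero_pi_iff)
qed

lemma sum_cos_int_multiples:
  fixes d :: int
  assumes "d \<noteq> 0" "\<bar>d\<bar> < 2 * int n"
  shows "(\<Sum>k<n. cos (real k * (of_int d * pi / real n))) = (if even d then 0 else 1)"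
proof -
  define y where "y = of_int d * pi / real n"
  have n: "real n > 0"
    using assms by simp
  have half: "y / 2 = of_int d * pi / (2 * real n)"
    by (simp add: y_def)
  have "(real n - 1 / 2) * y = pi * of_int d - y / 2"
    using n by (simp add: y_def field_simps)
  then have "sin ((real n - 1 / 2) * y) = - (if even d then 1 else -1) * sin (y / 2)"
    by (simp add: sin_diff)
  with sum_cos_multiples_telescope[of y n]
  have "sin (y / 2) * (2 * (\<Sum>k<n. cos (real k * y))) = sin (y / 2) * (if even d then 0 else 2)"
    by (cases "even d") (simp_all add: algebra_simps)
  moreover have "sin (y / 2) \<noteq> 0"
    unfolding half using sin_half_angle_nonzero[OF assms] .
  ultimately show ?thesis
    unfolding y_def[symmetric] by (cases "even d") simp_all
qed

lemma sum_cos_odd_int_multiples: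
  fixes d :: int
  assumes "d \<noteq> 0" "\<bar>d\<bar> < 2 * int n"
  shows "(\<Sum>i<n. cos (real (2 * i + 1) * (of_int d * pi / (2 * real n)))) = 0"
proof -
  have "real (2 * n) * (of_int d * pi / (2 * real n)) = pi * of_int d"
    using assms by (simp add: field_simps)
  then show ?thesis
    using sum_cos_odd_multiples_telescope[of "of_int d * pi / (2 * real n)" n]
      sin_half_angle_nonzero[OF assms] by simp
qed

lemma sum_sin_sin_orthogonal:
  assumes "1 \<le> a" "a < n" "1 \<le> b" "b < n"
  shows "(\<Sum>k<n. sin (real a * real k * pi / real n) * sin (real b * real k * pi / real n))
    = (if a = b then real n / 2 else 0)"
proof -
  have product_to_sum: "sin (real a * real k * pi / real n) * sin (real b * real k * pi / real n)
      = (cos (real k * (of_int (int a - int b) * pi / real n))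
        - cos (real k * (of_int (int a + int b) * pi / real n))) / 2" for k
    by (simp add: sin_times_sin algebra_simps add_divide_distrib diff_divide_distrib)
  have "(\<Sum>k<n. sin (real a * real k * pi / real n) * sin (real b * real k * pi / real n))
      = ((\<Sum>k<n. cos (real k * (of_int (int a - int b) * pi / real n)))
        - (\<Sum>k<n. cos (real k * (of_int (int a + int b) * pi / real n)))) / 2"
    unfolding product_to_sum by (simp only: sum_divide_distrib[symmetric] sum_subtractf)
  also have "\<dots> = (if a = b then real n / 2 else 0)"
  proof -
    have sum: "(\<Sum>k<n. cos (real k * (of_int (int a + int b) * pi / real n)))
        = (if even (int a + int b) then 0 else 1)"
      using assms by (intro sum_cos_int_multiples) auto
    have diff: "(\<Sum>k<n. cos (real k * (of_int (int a - int b) * pi / real n)))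
        = (if even (int a - int b) then 0 else 1)" if "a \<noteq> b"
      using assms that by (intro sum_cos_int_multiples) auto
    show ?thesis
      using sum diff by (cases "a = b") auto
  qed
  finally show ?thesis .
qed

lemma sum_cos_cos_orthogonal:
  assumes "a < n" "b < n"
  shows "(\<Sum>i<n. cos (real (2 * i + 1) * real a * pi / (2 * real n))
      * cos (real (2 * i + 1) * real b * pi / (2 * real n)))
    = (if a = b then if a = 0 then real n else real n / 2 else 0)"
proof -
  have product_to_sum: "cos (real (2 * i + 1) * real a * pi / (2 * real n))
        * cos (real (2 * i + 1) * real b * pi / (2 * real n))
      = (cos (real (2 * i + 1) * (of_int (int a - int b) * pi / (2 * real n)))
        + cos (real (2 * i + 1) * (of_int (int a + int b) * pi / (2 * real n)))) / 2" for i
    by (simp add: cos_times_cos algebra_simps add_divide_distrib diff_divide_distrib)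
  have "(\<Sum>i<n. cos (real (2 * i + 1) * real a * pi / (2 * real n))
        * cos (real (2 * i + 1) * real b * pi / (2 * real n)))
      = ((\<Sum>i<n. cos (real (2 * i + 1) * (of_int (int a - int b) * pi / (2 * real n))))
        + (\<Sum>i<n. cos (real (2 * i + 1) * (of_int (int a + int b) * pi / (2 * real n))))) / 2"
    unfolding product_to_sum by (simp only: sum_divide_distrib[symmetric] sum.distrib)
  also have "\<dots> = (if a = b then if a = 0 then real n else real n / 2 else 0)"
  proof -
    have sum: "(\<Sum>i<n. cos (real (2 * i + 1) * (of_int (int a + int b) * pi / (2 * real n)))) = 0"
      if "a \<noteq> 0 \<or> b \<noteq> 0"
      using assms that by (intro sum_cos_odd_int_multiples) auto
    have diff: "(\<Sum>i<n. cos (real (2 * i + 1) * (of_int (int a - int b) * pi / (2 * real n)))) = 0"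
      if "a \<noteq> b"
      using assms that by (intro sum_cos_odd_int_multiples) auto
    show ?thesis
      using sum diff by (cases "a = b"; cases "a = 0") auto
  qed
  finally show ?thesis .
qed

lemma mat_inv_eqI:
  fixes A B :: "'a :: field mat"
  assumes A: "A \<in> carrier_mat k k" and B: "B \<in> carrier_mat k k" and AB: "A * B = 1\<^sub>m k"
  shows "invertible_mat A" and "mat_inv A = B"
proof -
  have inverse: "B \<in> carrier_mat (dim_row A) (dim_row A) \<and> inverts_mat A B \<and> inverts_mat B A"
    using A B AB mat_mult_left_right_inverse[OF A B AB] by (simp add: inverts_mat_def)
  then show "invertible_mat A"
    using A by (auto simp: invertible_mat_def)
  show "mat_inv A = B"
    unfolding mat_inv_def
  proof (rule some_equality)
    fix B' assume "B' \<in> carrier_mat (dim_row A) (dim_row A) \<and> inverts_mat A B' \<and> inverts_mat B' A"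
    then have B': "B' \<in> carrier_mat k k" and "B' * A = 1\<^sub>m k"
      using A by (auto simp: inverts_mat_def)
    have "B' = B' * (A * B)"
      using B' AB by simp
    also have "\<dots> = (B' * A) * B"
      using A B B' by simp
    finally show "B' = B"
      using B \<open>B' * A = 1\<^sub>m k\<close> by simp
  qed (rule inverse)
qed

lemma scaled_orthogonal_mat_inv:
  fixes Q :: "'a :: field mat"
  assumes Q: "Q \<in> carrier_mat k k" and "c \<noteq> 0"
    and orthogonal: "transpose_mat Q * Q = c \<cdot>\<^sub>m 1\<^sub>m k"
  shows "invertible_mat Q"
    and "mat_inv Q = (1 / c) \<cdot>\<^sub>m transpose_mat Q"
    and "mat_inv (transpose_mat Q) = (1 / c) \<cdot>\<^sub>m Q"
proof -
  have Qt: "transpose_mat Q \<in> carrier_mat k k" and Qt': "(1 / c) \<cdot>\<^sub>m transpose_mat Q \<in> carrier_mat k k"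
    using Q by auto
  have rescale: "(1 / c) \<cdot>\<^sub>m (c \<cdot>\<^sub>m 1\<^sub>m k) = 1\<^sub>m k"
    using \<open>c \<noteq> 0\<close> by (intro eq_matI) auto
  have left_inverse: "((1 / c) \<cdot>\<^sub>m transpose_mat Q) * Q = 1\<^sub>m k"
    using Q Qt by (simp add: mult_smult_assoc_mat orthogonal rescale)
  show "invertible_mat Q" and "mat_inv Q = (1 / c) \<cdot>\<^sub>m transpose_mat Q"
    using mat_inv_eqI[OF Q Qt' mat_mult_left_right_inverse[OF Qt' Q left_inverse]] by auto
  have "transpose_mat Q * ((1 / c) \<cdot>\<^sub>m Q) = 1\<^sub>m k"
    using Q Qt by (simp add: mult_smult_distrib orthogonal rescale)
  then show "mat_inv (transpose_mat Q) = (1 / c) \<cdot>\<^sub>m Q"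
    using mat_inv_eqI[OF Qt] Q by auto
qed

lemma transpose_S_mat: "transpose_mat (S_mat n) = S_mat n"
  by (intro eq_matI) (auto simp: S_mat_def mult.commute)

lemma S_mat_orthogonal: "transpose_mat (S_mat n) * S_mat n = (real n / 2) \<cdot>\<^sub>m 1\<^sub>m (n - 1)"
proof (rule eq_matI)
  fix i j assume "i < dim_row ((real n / 2) \<cdot>\<^sub>m 1\<^sub>m (n - 1))" "j < dim_col ((real n / 2) \<cdot>\<^sub>m 1\<^sub>m (n - 1))"
  then have i: "i < n - 1" and j: "j < n - 1"
    by auto
  define f where "f k = sin (real (i + 1) * real k * pi / real n) * sin (real (j + 1) * real k * pi / real n)" for k
  have "(transpose_mat (S_mat n) * S_mat n) $$ (i, j) = (\<Sum>k<n - 1. f (Suc k))"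
    using i j by (auto simp: transpose_S_mat S_mat_def scalar_prod_def f_def atLeast0LessThan
        mult.commute mult.left_commute intro!: sum.cong)
  also have "\<dots> = (\<Sum>k<n. f k)"
    using i sum.lessThan_Suc_shift[of f "n - 1"] by (simp add: f_def)
  also have "\<dots> = (if i = j then real n / 2 else 0)"
    unfolding f_def using i j by (subst sum_sin_sin_orthogonal) auto
  finally show "(transpose_mat (S_mat n) * S_mat n) $$ (i, j) = ((real n / 2) \<cdot>\<^sub>m 1\<^sub>m (n - 1)) $$ (i, j)"
    using i j by simp
qed (auto simp: S_mat_def)

lemma C_mat_orthogonal: "transpose_mat (C_mat n) * C_mat n = (real n / 2) \<cdot>\<^sub>m 1\<^sub>m n"
proof (rule eq_matI)
  fix a b assume "a < dim_row ((real n / 2) \<cdot>\<^sub>m 1\<^sub>m n)" "b < dim_col ((real n / 2) \<cdot>\<^sub>m 1\<^sub>m n)"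
  then have a: "a < n" and b: "b < n"
    by auto
  have "(transpose_mat (C_mat n) * C_mat n) $$ (a, b)
      = nu a * nu b * (\<Sum>i<n. cos (real (2 * i + 1) * real a * pi / (2 * real n))
          * cos (real (2 * i + 1) * real b * pi / (2 * real n)))"
    using a b by (auto simp: C_mat_def scalar_prod_def sum_distrib_left atLeast0LessThan intro!: sum.cong)
  also have "\<dots> = nu a * nu b * (if a = b then if a = 0 then real n else real n / 2 else 0)"
    by (subst sum_cos_cos_orthogonal[OF a b]) (rule refl)
  also have "\<dots> = (if a = b then real n / 2 else 0)"
    by (auto simp: nu_def)
  finally show "(transpose_mat (C_mat n) * C_mat n) $$ (a, b) = ((real n / 2) \<cdot>\<^sub>m 1\<^sub>m n) $$ (a, b)"
    using a b by simp
qed (auto simp: C_mat_def)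

lemma B_mat_mult_C_mat: "B_mat n * C_mat n = S_mat n * Gamma_mat n"
proof (rule eq_matI)
  fix i j assume "i < dim_row (S_mat n * Gamma_mat n)" "j < dim_col (S_mat n * Gamma_mat n)"
  then have i: "i < n - 1" and j: "j < n"
    by (auto simp: S_mat_def Gamma_mat_def)
  define X where "X = real (i + 1) * real j * pi / real n"
  define Y where "Y = real j * pi / (2 * real n)"
  have "(B_mat n * C_mat n) $$ (i, j)
      = (\<Sum>k<n. (if k = i then - C_mat n $$ (k, j) else 0) + (if k = i + 1 then C_mat n $$ (k, j) else 0))"
    using i j by (auto simp: B_mat_def C_mat_def scalar_prod_def atLeast0LessThan intro!: sum.cong)
  also have "\<dots> = C_mat n $$ (i + 1, j) - C_mat n $$ (i, j)"
    using i by (simp add: sum.distrib less_diff_conv)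
  also have "\<dots> = nu j * (cos (X + Y) - cos (X - Y))"
    using i j by (simp add: C_mat_def X_def Y_def add_divide_distrib diff_divide_distrib algebra_simps)
  also have "\<dots> = (S_mat n * Gamma_mat n) $$ (i, j)"
  proof (cases "j = 0")
    case False
    have "(S_mat n * Gamma_mat n) $$ (i, j) = (\<Sum>k\<in>{0..<n - 1}. S_mat n $$ (i, k) * Gamma_mat n $$ (k, j))"
      using i j by (simp add: S_mat_def Gamma_mat_def scalar_prod_def)
    also have "\<dots> = (\<Sum>k\<in>{0..<n - 1}. if k = j - 1 then S_mat n $$ (i, k) * tau n j else 0)"
      using j False by (intro sum.cong) (auto simp: Gamma_mat_def)
    also have "\<dots> = S_mat n $$ (i, j - 1) * tau n j"
      using j False by simp
    also have "\<dots> = nu j * (cos (X + Y) - cos (X - Y))"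
      using i j False by (simp add: cos_add cos_diff S_mat_def tau_def nu_def X_def Y_def)
    finally show ?thesis ..
  qed (use i j in \<open>simp add: S_mat_def Gamma_mat_def scalar_prod_def X_def Y_def\<close>)
  finally show "(B_mat n * C_mat n) $$ (i, j) = (S_mat n * Gamma_mat n) $$ (i, j)" .
qed (auto simp: B_mat_def C_mat_def S_mat_def Gamma_mat_def)

theorem lemma2p1:
  fixes n :: nat
  assumes "n \<ge> 2"
  shows "invertible_mat (S_mat n) \<and> invertible_mat (C_mat n)
    \<and> mat_inv (S_mat n) * B_mat n * C_mat n = Gamma_mat n
    \<and> S_mat n * B_mat n * mat_inv (transpose_mat (C_mat n)) = Gamma_mat n"
proof -
  define c where "c = real n / 2"
  have "c \<noteq> 0"
    using assms by (simp add: c_def)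
  have S: "S_mat n \<in> carrier_mat (n - 1) (n - 1)" and C: "C_mat n \<in> carrier_mat n n"
    and B: "B_mat n \<in> carrier_mat (n - 1) n" and G: "Gamma_mat n \<in> carrier_mat (n - 1) n"
    by (simp_all add: S_mat_def C_mat_def B_mat_def Gamma_mat_def)
  note S_inv = scaled_orthogonal_mat_inv[OF S \<open>c \<noteq> 0\<close> S_mat_orthogonal[of n, folded c_def]]
  note C_inv = scaled_orthogonal_mat_inv[OF C \<open>c \<noteq> 0\<close> C_mat_orthogonal[of n, folded c_def]]
  have "S_mat n * (B_mat n * C_mat n) = (transpose_mat (S_mat n) * S_mat n) * Gamma_mat n"
    using S G by (simp add: B_mat_mult_C_mat transpose_S_mat)
  also have "\<dots> = c \<cdot>\<^sub>m Gamma_mat n"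
    using G by (simp add: S_mat_orthogonal c_def mult_smult_assoc_mat[OF one_carrier_mat])
  finally have "(1 / c) \<cdot>\<^sub>m (S_mat n * (B_mat n * C_mat n)) = Gamma_mat n"
    using \<open>c \<noteq> 0\<close> by (intro eq_matI) auto
  moreover have "mat_inv (S_mat n) * B_mat n * C_mat n = (1 / c) \<cdot>\<^sub>m (S_mat n * (B_mat n * C_mat n))"
    using S B C by (simp add: S_inv(2) transpose_S_mat mult_smult_assoc_mat
        mult_smult_assoc_mat[OF mult_carrier_mat[OF S B] C])
  moreover have "S_mat n * B_mat n * mat_inv (transpose_mat (C_mat n)) = (1 / c) \<cdot>\<^sub>m (S_mat n * (B_mat n * C_mat n))"
    using S B C by (simp add: C_inv(3) mult_smult_distrib[OF mult_carrier_mat[OF S B] C])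
  ultimately show ?thesis
    using S_inv(1) C_inv(1) by simp
qed

end
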